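(* Consider the partial differential equation, for real functions $\mu_t=\mu(t,x)$ and $\sigma_t=\sigma(t,x)>0$, $$\frac{\partial}{\partial x}\left[\frac{1}{\sigma_t}\frac{\partial\sigma_t}{\partial t}+\sigma_t\frac{\partial}{\partial x}\left(\frac12\frac{\partial\sigma_t}{\partial x}-\frac{\mu_t}{\sigma_t}\right)\right]=0.$$ Let $\tilde\sigma:[0,\infty)\to\mathbb{R}_+$. Then: 1. (L-class) If $\sigma(t,x)=\tilde\sigma(t)$, the general solution for the drift is $\mu(t,x)=\alpha(t)x+\beta(t)$, $x\in\mathbb{R}$, with $\alpha,\beta$ arbitrary real functions. 2. (G-class) If $\sigma(t,x)=\tilde\sigma(t)x$, the general solution for the drift is $\mu(t,x)=\alpha(t)x+\beta(t)x\log x$, $x\in\mathbb{R}_+$, with $\alpha,\beta$ arbitrary real functions. *)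

theory Defs
  imports "HOL-Analysis.Analysis"
begin

definition pdt :: "(real \<Rightarrow> real) \<Rightarrow> real \<Rightarrow> real" where
  "pdt f t = (SOME D. (f has_real_derivative D) (at t within {0..}))"

definition drift_bracket ::
  "(real \<Rightarrow> real \<Rightarrow> real) \<Rightarrow> (real \<Rightarrow> real \<Rightarrow> real) \<Rightarrow> real \<Rightarrow> real \<Rightarrow> real" where
  "drift_bracket \<sigma> \<mu> t y =
     pdt (\<lambda>s. \<sigma> s y) t / \<sigma> t y
     + \<sigma> t y * deriv (\<lambda>z. deriv (\<sigma> t) z / 2 - \<mu> t z / \<sigma> t z) y"

definition drift_pde ::
  "(real \<Rightarrow> real \<Rightarrow> real) \<Rightarrow> (real \<Rightarrow> real \<Rightarrow> real) \<Rightarrow> real \<Rightarrow> real \<Rightarrow> bool" where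
  "drift_pde \<sigma> \<mu> t x \<longleftrightarrow> ((drift_bracket \<sigma> \<mu> t) has_real_derivative 0) (at x)"

end

theory Submission
  imports Defs
begin

text \<open>
  In both classes the time term of the bracket, (d sigma/dt) / sigma, does not depend on x, so the PDE
  only constrains the spatial part. For sigma(t,x) = s(t) the bracket is s'(t)/s(t) - mu_x, and the PDE
  says mu_xx = 0, i.e. mu is affine in x. For sigma(t,x) = s(t) x it is s'(t)/s(t) - (mu_x - mu/x), and
  since mu_x - mu/x = x (mu/x)_x the PDE says (mu/x)_x = beta/x, i.e. mu/x = alpha + beta log x.
\<close>

lemma at_within_nonneg_neq_bot:
  fixes t :: real
  assumes "t \<ge> 0"
  shows "at t within {0..} \<noteq> bot"
proof -
  have "at_right t \<le> at t within {0..}"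
    using assms by (intro at_le) auto
  then show ?thesis
    using trivial_limit_at_right_real by (metis bot.extremum_uniqueI)
qed

lemma pdt_eqI:
  assumes "t \<ge> 0" "(f has_real_derivative D) (at t within {0..})"
  shows "pdt f t = D"
  unfolding pdt_def
proof (rule some_equality)
  show "(f has_real_derivative D) (at t within {0..})" by fact
next
  fix D' assume "(f has_real_derivative D') (at t within {0..})"
  then show "D' = D"
    using assms has_field_derivative_unique at_within_nonneg_neq_bot by blast
qed

lemma pdt_mult_right:
  assumes "t \<ge> 0" "f differentiable (at t within {0..})"
  shows "pdt (\<lambda>s. f s * c) t = pdt f t * c"
proof -
  obtain D where D: "(f has_real_derivative D) (at t within {0..})"
    using assms(2) real_differentiable_def by blast
  then have "((\<lambda>s. f s * c) has_real_derivative D * c) (at t within {0..})"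
    by (rule DERIV_cmult_right)
  then show ?thesis
    using pdt_eqI[OF assms(1)] D by metis
qed

lemma has_real_derivative_zero_iff_offset:
  assumes "open S" "x \<in> S" "\<And>y. y \<in> S \<Longrightarrow> f y = c - g y"
  shows "(f has_real_derivative 0) (at x) \<longleftrightarrow> (g has_real_derivative 0) (at x)"
proof -
  have "eventually (\<lambda>y. f y = c - g y) (nhds x)"
    using assms by (blast intro: eventually_nhds_in_open eventually_mono)
  then have "(f has_real_derivative 0) (at x) \<longleftrightarrow> ((\<lambda>y. c - g y) has_real_derivative 0) (at x)"
    by (intro DERIV_cong_ev) auto
  also have "\<dots> \<longleftrightarrow> (g has_real_derivative 0) (at x)"
  proof
    assume "((\<lambda>y. c - g y) has_real_derivative 0) (at x)"
    from DERIV_diff[OF DERIV_const[of c] this] show "(g has_real_derivative 0) (at x)" by simp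
  next
    assume "(g has_real_derivative 0) (at x)"
    from DERIV_diff[OF DERIV_const[of c] this] show "((\<lambda>y. c - g y) has_real_derivative 0) (at x)" by simp
  qed
  finally show ?thesis .
qed

lemma drift_bracket_L_class:
  assumes "s t \<noteq> 0" "\<mu> t differentiable (at y)"
  shows "drift_bracket (\<lambda>t x. s t) \<mu> t y = pdt s t / s t - deriv (\<mu> t) y"
proof -
  have "((\<lambda>z. 0 / 2 - \<mu> t z / s t) has_real_derivative 0 - deriv (\<mu> t) y / s t) (at y)"
    using assms by (auto intro!: derivative_eq_intros simp: DERIV_deriv_iff_real_differentiable)
  then have "deriv (\<lambda>z. 0 / 2 - \<mu> t z / s t) y = 0 - deriv (\<mu> t) y / s t"
    by (rule DERIV_imp_deriv)
  with assms(1) show ?thesis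
    unfolding drift_bracket_def deriv_const by simp
qed

lemma drift_bracket_G_class:
  assumes "s t \<noteq> 0" "y \<noteq> 0" "\<mu> t differentiable (at y)"
    and "t \<ge> 0" "s differentiable (at t within {0..})"
  shows "drift_bracket (\<lambda>t x. s t * x) \<mu> t y = pdt s t / s t - (deriv (\<mu> t) y - \<mu> t y / y)"
proof -
  have deriv_sigma: "deriv (\<lambda>z. s t * z) z = s t" for z
    by (rule DERIV_imp_deriv) (auto intro!: derivative_eq_intros)
  have "((\<lambda>z. s t / 2 - \<mu> t z / (s t * z)) has_real_derivative
      0 - (deriv (\<mu> t) y * (s t * y) - \<mu> t y * (s t * 1)) / (s t * y * (s t * y))) (at y)"
    using assms by (auto intro!: derivative_eq_intros simp: DERIV_deriv_iff_real_differentiable)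
  then have deriv_ratio: "deriv (\<lambda>z. s t / 2 - \<mu> t z / (s t * z)) y =
      0 - (deriv (\<mu> t) y * (s t * y) - \<mu> t y * (s t * 1)) / (s t * y * (s t * y))"
    by (rule DERIV_imp_deriv)
  show ?thesis
    using assms unfolding drift_bracket_def pdt_mult_right[OF assms(4,5)] deriv_sigma deriv_ratio
    by (simp add: field_simps)
qed

lemma drift_pde_L_class_iff:
  assumes "s t \<noteq> 0" "\<And>y. \<mu> t differentiable (at y)"
  shows "drift_pde (\<lambda>t x. s t) \<mu> t x \<longleftrightarrow> (deriv (\<mu> t) has_real_derivative 0) (at x)"
  unfolding drift_pde_def
  by (rule has_real_derivative_zero_iff_offset[OF open_UNIV UNIV_I])
    (use assms drift_bracket_L_class in blast)

lemma drift_pde_G_class_iff: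
  assumes "s t \<noteq> 0" "t \<ge> 0" "s differentiable (at t within {0..})"
    and "\<And>y. y > 0 \<Longrightarrow> \<mu> t differentiable (at y)" "x > 0"
  shows "drift_pde (\<lambda>t x. s t * x) \<mu> t x \<longleftrightarrow>
    ((\<lambda>y. deriv (\<mu> t) y - \<mu> t y / y) has_real_derivative 0) (at x)"
  unfolding drift_pde_def
  by (rule has_real_derivative_zero_iff_offset[of "{0<..}"])
    (use assms drift_bracket_G_class in auto)

lemma deriv_constant_iff_affine:
  fixes f :: "real \<Rightarrow> real"
  assumes "\<And>x. f differentiable (at x)"
  shows "(\<forall>x. (deriv f has_real_derivative 0) (at x)) \<longleftrightarrow> (\<exists>a b. \<forall>x. f x = a * x + b)"
proof
  assume "\<forall>x. (deriv f has_real_derivative 0) (at x)"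
  then have "deriv f x = deriv f 0" for x
    by (metis DERIV_isconst_all)
  then have "((\<lambda>x. f x - deriv f 0 * x) has_real_derivative 0) (at x)" for x
    using assms[of x] by (auto intro!: derivative_eq_intros simp: DERIV_deriv_iff_real_differentiable[symmetric])
  then have "f x - deriv f 0 * x = f 0" for x
    by (metis DERIV_isconst_all diff_zero mult_zero_right)
  then show "\<exists>a b. \<forall>x. f x = a * x + b"
    by (metis diff_add_cancel add.commute)
next
  assume "\<exists>a b. \<forall>x. f x = a * x + b"
  then obtain a b where "f = (\<lambda>x. a * x + b)"
    by blast
  then have "deriv f = (\<lambda>_. a)"
    by (auto intro!: DERIV_imp_deriv derivative_eq_intros)
  then show "\<forall>x. (deriv f has_real_derivative 0) (at x)"
    by simp
qed

lemma DERIV_zero_constant_on_positive: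
  fixes g :: "real \<Rightarrow> real"
  assumes "\<And>x. x > 0 \<Longrightarrow> (g has_real_derivative 0) (at x)"
  obtains c where "\<And>x. x > 0 \<Longrightarrow> g x = c"
  using has_field_derivative_0_imp_constant_on[of "{0<..}" g] assms
  unfolding constant_on_def by auto

lemma deriv_minus_ratio_constant_iff:
  fixes f :: "real \<Rightarrow> real"
  assumes "\<And>x. x > 0 \<Longrightarrow> f differentiable (at x)"
  shows "(\<forall>x>0. ((\<lambda>y. deriv f y - f y / y) has_real_derivative 0) (at x)) \<longleftrightarrow>
    (\<exists>a b. \<forall>x>0. f x = a * x + b * x * ln x)"
proof
  assume "\<forall>x>0. ((\<lambda>y. deriv f y - f y / y) has_real_derivative 0) (at x)"
  then obtain b where b: "\<And>y. y > 0 \<Longrightarrow> deriv f y - f y / y = b"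
    using DERIV_zero_constant_on_positive by blast
  have "((\<lambda>y. f y / y - b * ln y) has_real_derivative 0) (at y)" if "y > 0" for y
  proof -
    have "((\<lambda>y. f y / y - b * ln y) has_real_derivative
        (deriv f y * y - f y * 1) / (y * y) - b * (1 / y)) (at y)"
      using that assms[of y]
      by (auto intro!: derivative_eq_intros simp: DERIV_deriv_iff_real_differentiable[symmetric])
    moreover have "(deriv f y * y - f y * 1) / (y * y) - b * (1 / y) = 0"
      using that b[OF that] by (simp add: field_simps)
    ultimately show ?thesis by simp
  qed
  then obtain a where "\<And>y. y > 0 \<Longrightarrow> f y / y - b * ln y = a"
    using DERIV_zero_constant_on_positive by blast
  then have "f x = a * x + b * x * ln x" if "x > 0" for x
    using that by (fastforce simp: field_simps)
  then show "\<exists>a b. \<forall>x>0. f x = a * x + b * x * ln x"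
    by blast
next
  assume "\<exists>a b. \<forall>x>0. f x = a * x + b * x * ln x"
  then obtain a b where f: "\<And>x. x > 0 \<Longrightarrow> f x = a * x + b * x * ln x"
    by blast
  have "deriv f y - f y / y = b" if "y > 0" for y
  proof -
    have "((\<lambda>x. a * x + b * x * ln x) has_real_derivative a + b * (ln y + 1)) (at y)"
      using that by (auto intro!: derivative_eq_intros simp: field_simps)
    then have "(f has_real_derivative a + b * (ln y + 1)) (at y)"
      by (rule has_field_derivative_transform_within_open[where S="{0<..}"]) (use that f in auto)
    then show ?thesis
      using that by (simp add: DERIV_imp_deriv f field_simps)
  qed
  then show "\<forall>x>0. ((\<lambda>y. deriv f y - f y / y) has_real_derivative 0) (at x)"
    by (auto intro: has_field_derivative_transform_within_open[where S="{0<..}" and f="\<lambda>_. b"])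
qed

lemma drift_pde_L_class_solutions:
  fixes s :: "real \<Rightarrow> real" and \<mu> :: "real \<Rightarrow> real \<Rightarrow> real"
  assumes "\<And>t. t \<ge> 0 \<Longrightarrow> s t \<noteq> 0"
    and "\<And>t x. t \<ge> 0 \<Longrightarrow> \<mu> t differentiable (at x)"
  shows "(\<forall>t\<ge>0. \<forall>x. drift_pde (\<lambda>t x. s t) \<mu> t x) \<longleftrightarrow>
    (\<exists>\<alpha> \<beta>. \<forall>t\<ge>0. \<forall>x. \<mu> t x = \<alpha> t * x + \<beta> t)"
proof -
  have "(\<forall>x. drift_pde (\<lambda>t x. s t) \<mu> t x) \<longleftrightarrow> (\<exists>a b. \<forall>x. \<mu> t x = a * x + b)"
    if "t \<ge> 0" for t
    using assms that drift_pde_L_class_iff[of s t \<mu>] deriv_constant_iff_affine[of "\<mu> t"] by auto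
  then show ?thesis
    by metis
qed

lemma drift_pde_G_class_solutions:
  fixes s :: "real \<Rightarrow> real" and \<mu> :: "real \<Rightarrow> real \<Rightarrow> real"
  assumes "\<And>t. t \<ge> 0 \<Longrightarrow> s t \<noteq> 0"
    and "\<And>t. t \<ge> 0 \<Longrightarrow> s differentiable (at t within {0..})"
    and "\<And>t x. t \<ge> 0 \<Longrightarrow> x > 0 \<Longrightarrow> \<mu> t differentiable (at x)"
  shows "(\<forall>t\<ge>0. \<forall>x>0. drift_pde (\<lambda>t x. s t * x) \<mu> t x) \<longleftrightarrow>
    (\<exists>\<alpha> \<beta>. \<forall>t\<ge>0. \<forall>x>0. \<mu> t x = \<alpha> t * x + \<beta> t * x * ln x)"
proof -
  have "(\<forall>x>0. drift_pde (\<lambda>t x. s t * x) \<mu> t x) \<longleftrightarrow> (\<exists>a b. \<forall>x>0. \<mu> t x = a * x + b * x * ln x)"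
    if "t \<ge> 0" for t
    using assms that drift_pde_G_class_iff[of s t \<mu>] deriv_minus_ratio_constant_iff[of "\<mu> t"] by auto
  then show ?thesis
    by metis
qed

theorem corollary6:
  fixes sig :: "real \<Rightarrow> real"
  assumes pos: "\<forall>t\<ge>0. sig t > 0"
    and diff: "\<forall>t\<ge>0. sig differentiable (at t within {0..})"
  shows
    "(\<forall>\<mu> :: real \<Rightarrow> real \<Rightarrow> real.
        (\<forall>t\<ge>0. \<forall>x. \<mu> t differentiable (at x) \<and> deriv (\<mu> t) differentiable (at x)) \<longrightarrow>
        ((\<forall>t\<ge>0. \<forall>x. drift_pde (\<lambda>t x. sig t) \<mu> t x) \<longleftrightarrow>
         (\<exists>\<alpha> \<beta> :: real \<Rightarrow> real. \<forall>t\<ge>0. \<forall>x. \<mu> t x = \<alpha> t * x + \<beta> t)))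
   \<and> (\<forall>\<mu> :: real \<Rightarrow> real \<Rightarrow> real.
        (\<forall>t\<ge>0. \<forall>x>0. \<mu> t differentiable (at x) \<and> deriv (\<mu> t) differentiable (at x)) \<longrightarrow>
        ((\<forall>t\<ge>0. \<forall>x>0. drift_pde (\<lambda>t x. sig t * x) \<mu> t x) \<longleftrightarrow>
         (\<exists>\<alpha> \<beta> :: real \<Rightarrow> real. \<forall>t\<ge>0. \<forall>x>0. \<mu> t x = \<alpha> t * x + \<beta> t * x * ln x)))"
  using pos diff
  by (intro conjI allI impI drift_pde_L_class_solutions drift_pde_G_class_solutions) auto

end
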